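(* Let $C$ be a weakly compact convex subset of a Banach space $X$ and let $T:C\to C$ be an orbitally Kannan mapping which diminishes the radius of orbits. Then: (1) if $T$ has no fixed point, there exists a closed convex subset $K_0\subseteq C$ with $T(K_0)\subseteq K_0$, $\delta(K_0)>0$, and $r_x(O_T(x))=\delta(K_0)$ for all $x\in K_0$; (2) if for each closed convex subset $K_0$ of $C$ with $\delta(K_0)>0$ there exists $x_0\in K_0$ such that $r_{x_0}(O_T(y))<\delta(K_0)$ for all $y\in K_0$, then $T$ has a unique fixed point.
   Context: For $x\in X$ and $A\subseteq X$, $r_x(A)=\sup\{\|x-y\|:y\in A\}$ and $\delta(A)=\sup\{\|u-v\|:u,v\in A\}$; $O_T(x)=\{x,Tx,T^2x,\dots\}$. $T$ is orbitally Kannan if $\|Tx-Ty\|\le\frac12\big(r_x(O_T(x))+r_y(O_T(y))\big)$ for all $x,y\in C$. $T$ diminishes the radius of orbits if $r_{Tx}(O_T(Tx))\le r_x(O_T(x))$ for all $x\in C$. *)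

theory Defs
  imports "HOL-Analysis.Analysis"
begin

definition weak_topology :: "('a::real_normed_vector) topology" where
  "weak_topology = topology_generated_by
     {{x. f x \<in> U} | f U. bounded_linear (f :: 'a \<Rightarrow> real) \<and> open U}"

definition weakly_compact :: "('a::real_normed_vector) set \<Rightarrow> bool" where
  "weakly_compact C \<longleftrightarrow> compactin weak_topology C"

definition orbit :: "('a \<Rightarrow> 'a) \<Rightarrow> 'a \<Rightarrow> 'a set" where
  "orbit T x = range (\<lambda>n. (T ^^ n) x)"

definition radius_at :: "'a::real_normed_vector \<Rightarrow> 'a set \<Rightarrow> real" where
  "radius_at x A = (SUP y\<in>A. norm (x - y))"

definition orbitally_kannan :: "'a::real_normed_vector set \<Rightarrow> ('a \<Rightarrow> 'a) \<Rightarrow> bool" where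
  "orbitally_kannan C T \<longleftrightarrow> (\<forall>x\<in>C. \<forall>y\<in>C.
     norm (T x - T y) \<le> (radius_at x (orbit T x) + radius_at y (orbit T y)) / 2)"

definition diminishes_orbit_radius :: "'a::real_normed_vector set \<Rightarrow> ('a \<Rightarrow> 'a) \<Rightarrow> bool" where
  "diminishes_orbit_radius C T \<longleftrightarrow> (\<forall>x\<in>C.
     radius_at (T x) (orbit T (T x)) \<le> radius_at x (orbit T x))"

end

theory Submission
  imports Defs
begin

(* Weak compactness and Zorn's lemma give a minimal nonempty closed convex T-invariant subset K
   of C; this uses that closed convex sets are weakly closed, which follows from the Hahn-Banach
   separation theorem (Zorn on graphs of dominated functionals, plus the Minkowski gauge).
   For z in K the set of v in K with ||v - T y|| <= (r_z + r_y)/2 for all y in K, where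
   r_x = r_x(O_T(x)), is closed and convex, contains T z by the Kannan inequality and is
   T-invariant because T diminishes orbit radii. By minimality it is all of K, which forces r_x to
   be a constant c on K with ||w - T y|| <= c for w, y in K. Then K /\ (INT w:K. cball w c) is
   again invariant, hence equal to K, so delta(K) = c. Without fixed points delta(K) > 0, which is
   (1); under the hypothesis of (2) some x0 in K has r_x0 < delta(K), a contradiction, and
   uniqueness follows from the Kannan inequality since fixed points have orbit radius 0. *)

section \<open>Hahn-Banach extension\<close>

(* A linear functional on a subspace is represented by its graph, so that a chain of extensions
   is bounded by its union. *)
definition dominated_linear_graph :: "('a::real_vector \<Rightarrow> real) \<Rightarrow> ('a \<times> real) set \<Rightarrow> bool" where
  "dominated_linear_graph p G \<longleftrightarrow>
     subspace G \<and> (\<forall>a. (0, a) \<in> G \<longrightarrow> a = 0) \<and> (\<forall>(x, a) \<in> G. a \<le> p x)"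

lemma dominated_linear_graph_zero: "dominated_linear_graph p G \<Longrightarrow> (0, 0) \<in> G"
  unfolding dominated_linear_graph_def using subspace_0 by (fastforce simp: zero_prod_def)

lemma dominated_linear_graph_scaleR:
  "dominated_linear_graph p G \<Longrightarrow> (x, a) \<in> G \<Longrightarrow> (s *\<^sub>R x, s * a) \<in> G"
  unfolding dominated_linear_graph_def using subspace_scale by fastforce

lemma dominated_linear_graph_le: "dominated_linear_graph p G \<Longrightarrow> (x, a) \<in> G \<Longrightarrow> a \<le> p x"
  unfolding dominated_linear_graph_def by blast

lemma dominated_linear_graph_unique:
  assumes "dominated_linear_graph p G" "(x, a) \<in> G" "(x, b) \<in> G"
  shows "a = b"
proof -
  have "subspace G" and G_fun: "\<And>a. (0, a) \<in> G \<Longrightarrow> a = 0"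
    using assms(1) unfolding dominated_linear_graph_def by blast+
  then have "(x, a) - (x, b) \<in> G" using assms(2,3) by (intro subspace_diff)
  then show ?thesis using G_fun by fastforce
qed

lemma dominated_linear_graph_extension_value:
  fixes p :: "'a::real_vector \<Rightarrow> real"
  assumes sub: "\<And>x y. p (x + y) \<le> p x + p y" and G: "dominated_linear_graph p G"
  obtains c where "\<And>x a. (x, a) \<in> G \<Longrightarrow> a - p (x - y) \<le> c"
    and "\<And>z b. (z, b) \<in> G \<Longrightarrow> c \<le> p (z + y) - b"
proof -
  have G0: "(0, 0) \<in> G" using G by (rule dominated_linear_graph_zero)
  have below_above: "a - p (x - y) \<le> p (z + y) - b" if "(x, a) \<in> G" "(z, b) \<in> G" for x a z b
  proof -
    have "(x + z, a + b) \<in> G"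
      using G subspace_add[of G "(x, a)" "(z, b)"] that unfolding dominated_linear_graph_def by simp
    then have "a + b \<le> p ((x - y) + (z + y))" using G by (simp add: dominated_linear_graph_le)
    then show ?thesis using sub[of "x - y" "z + y"] by linarith
  qed
  have bdd: "bdd_above ((\<lambda>(x, a). a - p (x - y)) ` G)"
    using below_above[OF _ G0] by (intro bdd_aboveI2[where M = "p y"]) auto
  show ?thesis
  proof (rule that[of "SUP (x, a)\<in>G. a - p (x - y)"])
    show "a - p (x - y) \<le> (SUP (x, a)\<in>G. a - p (x - y))" if "(x, a) \<in> G" for x a
      using cSUP_upper[OF that bdd] by simp
    show "(SUP (x, a)\<in>G. a - p (x - y)) \<le> p (z + y) - b" if "(z, b) \<in> G" for z b
      using G0 below_above[OF _ that] by (intro cSUP_least) auto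
  qed
qed

lemma dominated_linear_graph_extension_bound:
  fixes p :: "'a::real_vector \<Rightarrow> real"
  assumes hom: "\<And>s x. 0 < s \<Longrightarrow> p (s *\<^sub>R x) = s * p x" and G: "dominated_linear_graph p G"
    and c_lower: "\<And>x a. (x, a) \<in> G \<Longrightarrow> a - p (x - y) \<le> c"
    and c_upper: "\<And>z b. (z, b) \<in> G \<Longrightarrow> c \<le> p (z + y) - b"
    and xa: "(x, a) \<in> G"
  shows "a + t * c \<le> p (x + t *\<^sub>R y)"
proof (cases t "0::real" rule: linorder_cases)
  case less
  have "a / -t - p (x /\<^sub>R -t - y) \<le> c"
    using c_lower[OF dominated_linear_graph_scaleR[OF G xa, of "inverse (-t)"]]
    by (simp add: divide_inverse mult.commute)
  then have "a - -t * p (x /\<^sub>R -t - y) \<le> -t * c"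
    using less by (simp add: field_simps)
  moreover have "-t * p (x /\<^sub>R -t - y) = p (x + t *\<^sub>R y)"
    using hom[of "-t" "x /\<^sub>R -t - y"] less by (simp add: scaleR_diff_right)
  ultimately show ?thesis by simp
next
  case greater
  have "c \<le> p (x /\<^sub>R t + y) - a / t"
    using c_upper[OF dominated_linear_graph_scaleR[OF G xa, of "inverse t"]]
    by (simp add: divide_inverse mult.commute)
  then have "t * c \<le> t * p (x /\<^sub>R t + y) - a"
    using greater by (simp add: field_simps)
  moreover have "t * p (x /\<^sub>R t + y) = p (x + t *\<^sub>R y)"
    using hom[of t "x /\<^sub>R t + y"] greater by (simp add: scaleR_add_right)
  ultimately show ?thesis by simp
qed (use dominated_linear_graph_le[OF G xa] in simp)

lemma dominated_linear_graph_extend: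
  fixes p :: "'a::real_vector \<Rightarrow> real"
  assumes sub: "\<And>x y. p (x + y) \<le> p x + p y"
    and hom: "\<And>s x. 0 < s \<Longrightarrow> p (s *\<^sub>R x) = s * p x"
    and G: "dominated_linear_graph p G" and y: "y \<notin> fst ` G"
  shows "\<exists>G'. dominated_linear_graph p G' \<and> G \<subset> G'"
proof -
  obtain c where c_lower: "\<And>x a. (x, a) \<in> G \<Longrightarrow> a - p (x - y) \<le> c"
    and c_upper: "\<And>z b. (z, b) \<in> G \<Longrightarrow> c \<le> p (z + y) - b"
    using dominated_linear_graph_extension_value[OF sub G] by blast
  define G' where "G' = {g + h | g h. g \<in> G \<and> h \<in> span {(y, c)}}"
  have G'_iff: "(u, b) \<in> G' \<longleftrightarrow> (\<exists>x a t. (x, a) \<in> G \<and> u = x + t *\<^sub>R y \<and> b = a + t * c)" for u b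
    unfolding G'_def span_singleton by force
  have "dominated_linear_graph p G'"
    unfolding dominated_linear_graph_def
  proof (intro conjI allI impI ballI)
    show "subspace G'"
      unfolding G'_def using G subspace_span unfolding dominated_linear_graph_def
      by (intro subspace_sums) auto
  next
    fix b assume "(0, b) \<in> G'"
    then obtain x a t where xa: "(x, a) \<in> G" and "0 = x + t *\<^sub>R y" and b: "b = a + t * c"
      unfolding G'_iff by blast
    then have x: "x = - t *\<^sub>R y" by (simp add: eq_neg_iff_add_eq_0)
    show "b = 0"
    proof (cases "t = 0")
      case True
      then show ?thesis
        using xa x b G dominated_linear_graph_unique dominated_linear_graph_zero by fastforce
    next
      case False
      then have "(y, - a / t) \<in> G"
        using dominated_linear_graph_scaleR[OF G xa, of "- inverse t"] x
        by (simp add: divide_inverse mult.commute)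
      then show ?thesis using y by force
    qed
  next
    fix ub assume "ub \<in> G'"
    then show "case ub of (u, b) \<Rightarrow> b \<le> p u"
      using dominated_linear_graph_extension_bound[OF hom G c_lower c_upper] by (auto simp: G'_iff)
  qed
  moreover have "G \<subset> G'"
  proof
    show "G \<subseteq> G'" by (force simp: G'_iff intro: exI[of _ 0])
    have "(y, c) \<in> G'"
      using G'_iff[of y c] dominated_linear_graph_zero[OF G] by (metis add_0 mult_1 scaleR_one)
    then show "G \<noteq> G'" using y by force
  qed
  ultimately show ?thesis by blast
qed

lemma subspace_Union_chain:
  assumes "\<C> \<noteq> {}" and "subset.chain {S. subspace S} \<C>"
  shows "subspace (\<Union>\<C>)"
proof -
  have sub: "\<And>S. S \<in> \<C> \<Longrightarrow> subspace S"
    and chain: "\<And>S T. S \<in> \<C> \<Longrightarrow> T \<in> \<C> \<Longrightarrow> S \<subseteq> T \<or> T \<subseteq> S"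
    using assms(2) unfolding subset_chain_def by blast+
  show ?thesis
    unfolding subspace_def
  proof (intro conjI ballI allI)
    show "0 \<in> \<Union>\<C>" using assms(1) sub subspace_0 by blast
  next
    fix x y assume "x \<in> \<Union>\<C>" "y \<in> \<Union>\<C>"
    then obtain S where "S \<in> \<C>" "x \<in> S" "y \<in> S" using chain by blast
    then show "x + y \<in> \<Union>\<C>" using sub subspace_add by blast
  next
    fix c and x :: 'a assume "x \<in> \<Union>\<C>"
    then show "c *\<^sub>R x \<in> \<Union>\<C>" using sub subspace_scale by blast
  qed
qed

lemma dominated_linear_graph_Union_chain:
  assumes "\<C> \<noteq> {}" and "subset.chain {G. dominated_linear_graph p G} \<C>"
  shows "dominated_linear_graph p (\<Union>\<C>)"
proof -
  have dom: "\<And>G. G \<in> \<C> \<Longrightarrow> dominated_linear_graph p G"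
    using assms(2) unfolding subset_chain_def by blast
  have "subset.chain {S. subspace S} \<C>"
    using assms(2) dom unfolding subset_chain_def dominated_linear_graph_def by blast
  with assms(1) have "subspace (\<Union>\<C>)" by (rule subspace_Union_chain)
  moreover have "a = 0" if "(0, a) \<in> \<Union>\<C>" for a
    using that dom unfolding dominated_linear_graph_def by blast
  moreover have "a \<le> p x" if "(x, a) \<in> \<Union>\<C>" for x a
    using that dom unfolding dominated_linear_graph_def by blast
  ultimately show ?thesis unfolding dominated_linear_graph_def by blast
qed

lemma dominated_linear_graph_total_imp_linear:
  assumes M: "dominated_linear_graph p M" and total: "\<And>x. \<exists>a. (x, a) \<in> M"
  shows "\<exists>f. linear f \<and> (\<forall>x a. (x, a) \<in> M \<longleftrightarrow> f x = a)"
proof -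
  define f where "f x = (THE a. (x, a) \<in> M)" for x
  have f_graph: "(x, a) \<in> M \<longleftrightarrow> f x = a" for x a
  proof -
    obtain b where b: "(x, b) \<in> M" using total by blast
    have "f x = b" unfolding f_def
      by (rule the_equality) (use b dominated_linear_graph_unique[OF M] in auto)
    then show ?thesis using b dominated_linear_graph_unique[OF M b] by blast
  qed
  have M_sub: "subspace M" using M unfolding dominated_linear_graph_def by blast
  have "linear f"
  proof (rule linearI)
    fix x y
    show "f (x + y) = f x + f y"
      using subspace_add[OF M_sub, of "(x, f x)" "(y, f y)"] f_graph by simp
  next
    fix r x
    show "f (r *\<^sub>R x) = r *\<^sub>R f x"
      using subspace_scale[OF M_sub, of "(x, f x)" r] f_graph by simp
  qed
  then show ?thesis using f_graph by blast
qed

theorem hahn_banach_graph: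
  fixes p :: "'a::real_vector \<Rightarrow> real"
  assumes sub: "\<And>x y. p (x + y) \<le> p x + p y"
    and hom: "\<And>s x. 0 < s \<Longrightarrow> p (s *\<^sub>R x) = s * p x"
    and G0: "dominated_linear_graph p G0"
  shows "\<exists>f. linear f \<and> (\<forall>x. f x \<le> p x) \<and> (\<forall>(x, a)\<in>G0. f x = a)"
proof -
  define \<A> where "\<A> = {G. dominated_linear_graph p G \<and> G0 \<subseteq> G}"
  have "\<exists>M\<in>\<A>. \<forall>G\<in>\<A>. M \<subseteq> G \<longrightarrow> G = M"
  proof (rule subset_Zorn_nonempty)
    show "\<A> \<noteq> {}" using G0 unfolding \<A>_def by blast
  next
    fix \<C> assume ne: "\<C> \<noteq> {}" and chain: "subset.chain \<A> \<C>"
    then have "subset.chain {G. dominated_linear_graph p G} \<C>"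
      unfolding subset_chain_def \<A>_def by blast
    with ne have "dominated_linear_graph p (\<Union>\<C>)" by (rule dominated_linear_graph_Union_chain)
    moreover have "G0 \<subseteq> \<Union>\<C>" using ne chain unfolding subset_chain_def \<A>_def by blast
    ultimately show "\<Union>\<C> \<in> \<A>" unfolding \<A>_def by blast
  qed
  then obtain M where "M \<in> \<A>" and M_max: "\<forall>G\<in>\<A>. M \<subseteq> G \<longrightarrow> G = M" ..
  then have M: "dominated_linear_graph p M" "G0 \<subseteq> M" unfolding \<A>_def by auto
  have "\<exists>a. (x, a) \<in> M" for x
  proof (rule ccontr)
    assume "\<nexists>a. (x, a) \<in> M"
    then have "x \<notin> fst ` M" by force
    then obtain G where "dominated_linear_graph p G" "M \<subset> G"
      using dominated_linear_graph_extend[OF sub hom M(1)] by blast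
    moreover from this have "G \<in> \<A>" using M(2) unfolding \<A>_def by blast
    ultimately show False using M_max by blast
  qed
  then obtain f where "linear f" and f_graph: "\<And>x a. (x, a) \<in> M \<longleftrightarrow> f x = a"
    using dominated_linear_graph_total_imp_linear[OF M(1)] by blast
  moreover have "f x \<le> p x" for x using dominated_linear_graph_le[OF M(1)] f_graph by blast
  moreover have "f x = a" if "(x, a) \<in> G0" for x a using that M(2) f_graph by blast
  ultimately show ?thesis by blast
qed

section \<open>Minkowski gauge and separation\<close>

definition minkowski_gauge :: "'a::real_vector set \<Rightarrow> 'a \<Rightarrow> real" where
  "minkowski_gauge U x = Inf {t. 0 < t \<and> x /\<^sub>R t \<in> U}"

lemma minkowski_gauge_le:
  assumes "0 < t" "x /\<^sub>R t \<in> U"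
  shows "minkowski_gauge U x \<le> t"
  unfolding minkowski_gauge_def
  by (rule cInf_lower) (use assms in \<open>auto intro: bdd_belowI[where m = 0]\<close>)

lemma ball_subset_imp_divideR_mem:
  fixes U :: "'a::real_normed_vector set"
  assumes "0 < r" "ball 0 r \<subseteq> U" "norm x / r < t"
  shows "0 < t" "x /\<^sub>R t \<in> U"
proof -
  show "0 < t" using assms(1,3) by (smt (verit) divide_nonneg_pos norm_ge_zero)
  then have "norm (x /\<^sub>R t) < r" using assms(1,3) by (simp add: field_simps)
  then show "x /\<^sub>R t \<in> U" using assms(2) by auto
qed

lemma minkowski_gauge_le_norm:
  fixes U :: "'a::real_normed_vector set"
  assumes "0 < r" "ball 0 r \<subseteq> U"
  shows "minkowski_gauge U x \<le> norm x / r"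
  using ball_subset_imp_divideR_mem[OF assms] minkowski_gauge_le by (metis dense_ge)

lemma minkowski_gauge_greatest:
  fixes U :: "'a::real_normed_vector set"
  assumes "0 < r" "ball 0 r \<subseteq> U" and le: "\<And>t. 0 < t \<Longrightarrow> x /\<^sub>R t \<in> U \<Longrightarrow> c \<le> t"
  shows "c \<le> minkowski_gauge U x"
proof -
  have "norm x / r + 1 \<in> {t. 0 < t \<and> x /\<^sub>R t \<in> U}"
    using ball_subset_imp_divideR_mem[OF assms(1,2), of x "norm x / r + 1"] by simp
  then show ?thesis unfolding minkowski_gauge_def using le by (intro cInf_greatest) auto
qed

lemma minkowski_gauge_nonneg:
  fixes U :: "'a::real_normed_vector set"
  assumes "0 < r" "ball 0 r \<subseteq> U"
  shows "0 \<le> minkowski_gauge U x"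
  using assms by (rule minkowski_gauge_greatest) simp

lemma minkowski_gauge_scaleR:
  fixes U :: "'a::real_normed_vector set"
  assumes "0 < r" "ball 0 r \<subseteq> U" "0 < a"
  shows "minkowski_gauge U (a *\<^sub>R x) = a * minkowski_gauge U x"
proof -
  have le: "minkowski_gauge U (a *\<^sub>R x) \<le> a * minkowski_gauge U x" if "0 < a" for a x
  proof -
    have "minkowski_gauge U (a *\<^sub>R x) / a \<le> t" if "0 < t" "x /\<^sub>R t \<in> U" for t
      using minkowski_gauge_le[of "a * t" "a *\<^sub>R x" U] that \<open>0 < a\<close> by (simp add: field_simps)
    then have "minkowski_gauge U (a *\<^sub>R x) / a \<le> minkowski_gauge U x"
      by (rule minkowski_gauge_greatest[OF assms(1,2)])
    then show ?thesis using \<open>0 < a\<close> by (simp add: field_simps)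
  qed
  have "minkowski_gauge U x \<le> inverse a * minkowski_gauge U (a *\<^sub>R x)"
    using le[of "inverse a" "a *\<^sub>R x"] assms(3) by simp
  then show ?thesis using le[OF assms(3), of x] assms(3) by (simp add: field_simps)
qed

lemma minkowski_gauge_add:
  fixes U :: "'a::real_normed_vector set"
  assumes "convex U" "0 < r" "ball 0 r \<subseteq> U"
  shows "minkowski_gauge U (x + y) \<le> minkowski_gauge U x + minkowski_gauge U y"
proof -
  have sum: "minkowski_gauge U (x + y) \<le> s + t"
    if "0 < s" "x /\<^sub>R s \<in> U" "0 < t" "y /\<^sub>R t \<in> U" for s t
  proof (rule minkowski_gauge_le)
    show "0 < s + t" using that by simp
    have "(s / (s + t)) *\<^sub>R (x /\<^sub>R s) + (t / (s + t)) *\<^sub>R (y /\<^sub>R t) \<in> U"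
      using that by (intro convexD[OF assms(1)]) (auto simp: add_divide_distrib[symmetric])
    moreover have "s * inverse (s + t) * inverse s = inverse (s + t)"
      and "t * inverse (s + t) * inverse t = inverse (s + t)"
      using that by (simp_all add: field_simps)
    ultimately show "(x + y) /\<^sub>R (s + t) \<in> U"
      by (simp add: scaleR_add_right divide_inverse)
  qed
  have "minkowski_gauge U (x + y) - t \<le> minkowski_gauge U x" if "0 < t" "y /\<^sub>R t \<in> U" for t
    using assms(2,3) by (rule minkowski_gauge_greatest) (use sum that in force)
  then have "minkowski_gauge U (x + y) - minkowski_gauge U x \<le> minkowski_gauge U y"
    using assms(2,3) by (intro minkowski_gauge_greatest) force+
  then show ?thesis by simp
qed

lemma minkowski_gauge_ge_1:
  fixes U :: "'a::real_normed_vector set"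
  assumes "convex U" "0 < r" "ball 0 r \<subseteq> U" "x \<notin> U"
  shows "1 \<le> minkowski_gauge U x"
  using assms(2,3)
proof (rule minkowski_gauge_greatest)
  fix t assume t: "0 < t" "x /\<^sub>R t \<in> U"
  show "1 \<le> t"
  proof (rule ccontr)
    assume "\<not> 1 \<le> t"
    have "0 \<in> U" using assms(2,3) by auto
    then have "t *\<^sub>R (x /\<^sub>R t) + (1 - t) *\<^sub>R 0 \<in> U"
      using t \<open>\<not> 1 \<le> t\<close> by (intro convexD[OF assms(1)]) auto
    then show False using t assms(4) by simp
  qed
qed

lemma dominated_linear_graph_span:
  fixes p :: "'a::real_normed_vector \<Rightarrow> real"
  assumes "x0 \<noteq> 0" "\<And>t. t \<le> p (t *\<^sub>R x0)"
  shows "dominated_linear_graph p (span {(x0, 1)})"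
  unfolding dominated_linear_graph_def
proof (intro conjI)
  show "\<forall>a. (0, a) \<in> span {(x0, 1)} \<longrightarrow> a = 0"
    using assms(1) by (auto simp: span_singleton)
  show "\<forall>(x, a)\<in>span {(x0, 1)}. a \<le> p x"
    using assms(2) by (auto simp: span_singleton)
qed simp

lemma separating_functional_absorbing_convex:
  fixes U :: "'a::real_normed_vector set"
  assumes "convex U" "0 < r" "ball 0 r \<subseteq> U" "x0 \<notin> U"
  shows "\<exists>f :: 'a \<Rightarrow> real. bounded_linear f \<and> f x0 = 1 \<and> (\<forall>x\<in>U. f x \<le> 1)"
proof -
  let ?g = "minkowski_gauge U"
  have x0_nz: "x0 \<noteq> 0" using assms(2-4) by (metis centre_in_ball subsetD)
  have g_add: "\<And>x y. ?g (x + y) \<le> ?g x + ?g y"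
    using minkowski_gauge_add[OF assms(1-3)] .
  have g_hom: "\<And>a x. 0 < a \<Longrightarrow> ?g (a *\<^sub>R x) = a * ?g x"
    using minkowski_gauge_scaleR[OF assms(2,3)] .
  have g_x0: "t \<le> ?g (t *\<^sub>R x0)" for t
  proof (cases "0 < t")
    case True
    then show ?thesis using g_hom[OF True] minkowski_gauge_ge_1[OF assms] by simp
  next
    case False
    then show ?thesis using minkowski_gauge_nonneg[OF assms(2,3)] by (smt (verit))
  qed
  have "(x0, 1) \<in> span {(x0, 1)}" by (simp add: span_base)
  then obtain f where f_linear: "linear f" and f_le: "\<And>x. f x \<le> ?g x" and f_x0: "f x0 = 1"
    using hahn_banach_graph[OF g_add g_hom dominated_linear_graph_span[OF x0_nz g_x0]] by fastforce
  have "\<bar>f x\<bar> \<le> norm x / r" for x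
    using f_le[of x] f_le[of "- x"] minkowski_gauge_le_norm[OF assms(2,3)] linear_neg[OF f_linear]
    by (smt (verit) norm_minus_cancel)
  then have "bounded_linear f"
    using f_linear by (intro bounded_linear_intro[where K = "1 / r"]) (auto simp: linear_add linear_scale)
  moreover have "f x \<le> 1" if "x \<in> U" for x
    using that f_le[of x] minkowski_gauge_le[of 1 x U] by simp
  ultimately show ?thesis using f_x0 by blast
qed

theorem separating_functional_closed_convex:
  fixes K :: "'a::real_normed_vector set"
  assumes "convex K" "closed K" "z \<notin> K"
  shows "\<exists>(f :: 'a \<Rightarrow> real) c. bounded_linear f \<and> c < f z \<and> (\<forall>x\<in>K. f x \<le> c)"
proof (cases "K = {}")
  case True
  then show ?thesis by (intro exI[of _ "\<lambda>x. 0"] exI[of _ "-1"]) simp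
next
  case False
  then obtain k0 where k0: "k0 \<in> K" by blast
  obtain r where r: "0 < r" "ball z r \<subseteq> - K"
    using assms(2,3) open_contains_ball[of "- K"] by blast
  \<comment> \<open>Thickening K - k0 by a ball makes U absorbing; the thickness yields the gap s below.\<close>
  define U where "U = (\<Union>x\<in>(\<lambda>k. k - k0) ` K. \<Union>w\<in>ball 0 r. {x + w})"
  have U_convex: "convex U"
    unfolding U_def by (intro convex_sums convex_translation_subtract assms(1) convex_ball)
  have U_ball: "ball 0 r \<subseteq> U" unfolding U_def using k0 by force
  have "z - k0 \<notin> U"
  proof
    assume "z - k0 \<in> U"
    then obtain k w where "k \<in> K" "norm w < r" "z = k + w"
      unfolding U_def by (auto simp: algebra_simps)
    then have "k \<in> ball z r" by (simp add: dist_norm)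
    then show False using r(2) \<open>k \<in> K\<close> by blast
  qed
  then obtain f :: "'a \<Rightarrow> real" where f: "bounded_linear f" "f (z - k0) = 1" "\<And>x. x \<in> U \<Longrightarrow> f x \<le> 1"
    using separating_functional_absorbing_convex[OF U_convex r(1) U_ball] by blast
  interpret f: bounded_linear f by (rule f(1))
  define s where "s = r / (2 * norm (z - k0))"
  have "z \<noteq> k0" using assms(3) k0 by blast
  then have s: "0 < s" "norm (s *\<^sub>R (z - k0)) < r" using r(1) by (simp_all add: s_def)
  have "f k \<le> f z - s" if "k \<in> K" for k
  proof -
    have "k - k0 + s *\<^sub>R (z - k0) \<in> U" unfolding U_def using that s(2) by force
    then have "f (k - k0 + s *\<^sub>R (z - k0)) \<le> 1" by (rule f(3))
    then show ?thesis using f(2) by (simp add: f.add f.diff f.scale)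
  qed
  then show ?thesis using f(1) s(1) by (intro exI[of _ f] exI[of _ "f z - s"]) auto
qed

section \<open>Weak topology\<close>

lemma topspace_weak_topology [simp]:
  "topspace (weak_topology :: 'a::real_normed_vector topology) = UNIV"
proof -
  have "UNIV \<in> {{x. f x \<in> U} | f U. bounded_linear (f :: 'a \<Rightarrow> real) \<and> open U}"
    by (intro CollectI exI[of _ "\<lambda>x. 0"] exI[of _ UNIV]) simp
  then show ?thesis unfolding weak_topology_def by auto
qed

lemma openin_weak_topology_halfspace:
  fixes f :: "'a::real_normed_vector \<Rightarrow> real"
  assumes "bounded_linear f"
  shows "openin weak_topology {x. c < f x}"
  unfolding weak_topology_def
  by (intro topology_generated_by_Basis CollectI exI[of _ f] exI[of _ "{c<..}"]) (auto simp: assms)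

lemma openin_weak_topology_imp_open:
  assumes "openin (weak_topology :: 'a::real_normed_vector topology) U"
  shows "open U"
proof -
  have "generate_topology_on {{x. f x \<in> U} | f U. bounded_linear (f :: 'a \<Rightarrow> real) \<and> open U} U"
    using assms unfolding weak_topology_def by (rule openin_topology_generated_by)
  then show ?thesis
  proof induct
    case (Basis s)
    then obtain f V where "s = f -` V" "bounded_linear (f :: 'a \<Rightarrow> real)" "open V" by auto
    then show ?case by (metis open_vimage linear_continuous_on)
  qed auto
qed

lemma closed_convex_imp_weakly_closed:
  fixes K :: "'a::real_normed_vector set"
  assumes "closed K" "convex K"
  shows "closedin weak_topology K"
proof -
  have "openin weak_topology (- K)"
  proof (subst openin_subopen, intro ballI)
    fix z assume "z \<in> - K"
    then obtain f c where f: "bounded_linear (f :: 'a \<Rightarrow> real)" "c < f z" "\<forall>x\<in>K. f x \<le> c"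
      using separating_functional_closed_convex[OF assms(2,1)] by blast
    then show "\<exists>V. openin weak_topology V \<and> z \<in> V \<and> V \<subseteq> - K"
      using openin_weak_topology_halfspace[OF f(1)] by (intro exI[of _ "{x. c < f x}"]) force
  qed
  then show ?thesis unfolding closedin_def by (simp add: Compl_eq_Diff_UNIV)
qed

lemma Hausdorff_space_weak_topology:
  "Hausdorff_space (weak_topology :: 'a::real_normed_vector topology)"
  unfolding Hausdorff_space_def
proof (intro allI impI)
  fix x y :: 'a assume "x \<in> topspace weak_topology \<and> y \<in> topspace weak_topology \<and> x \<noteq> y"
  then obtain f c where f: "bounded_linear (f :: 'a \<Rightarrow> real)" "c < f x" "f y \<le> c"
    using separating_functional_closed_convex[of "{y}" x] by auto
  define m where "m = (c + f x) / 2"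
  show "\<exists>U V. openin weak_topology U \<and> openin weak_topology V \<and> x \<in> U \<and> y \<in> V \<and> disjnt U V"
    using f openin_weak_topology_halfspace[OF f(1), of m]
      openin_weak_topology_halfspace[OF bounded_linear_minus[OF f(1)], of "- m"]
    by (intro exI[of _ "{z. m < f z}"] exI[of _ "{z. - m < - f z}"]) (auto simp: m_def disjnt_def)
qed

lemma weakly_compact_imp_closed:
  fixes C :: "'a::real_normed_vector set"
  assumes "weakly_compact C"
  shows "closed C"
proof -
  have "closedin weak_topology C"
    using compactin_imp_closedin[OF Hausdorff_space_weak_topology] assms
    unfolding weakly_compact_def by blast
  then show ?thesis
    unfolding closed_def closedin_def
    by (simp add: Compl_eq_Diff_UNIV openin_weak_topology_imp_open)
qed

section \<open>Orbit radii and Kannan shells\<close>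

abbreviation orbit_radius :: "('a::real_normed_vector \<Rightarrow> 'a) \<Rightarrow> 'a \<Rightarrow> real" where
  "orbit_radius T x \<equiv> radius_at x (orbit T x)"

lemma funpow_in_invariant: "T ` S \<subseteq> S \<Longrightarrow> x \<in> S \<Longrightarrow> (T ^^ n) x \<in> S"
  by (induction n) (simp_all add: image_subset_iff)

lemma orbit_subset: "T ` S \<subseteq> S \<Longrightarrow> x \<in> S \<Longrightarrow> orbit T x \<subseteq> S"
  unfolding orbit_def using funpow_in_invariant[of T S x] by blast

lemma self_in_orbit: "x \<in> orbit T x"
  using rangeI[of "\<lambda>n. (T ^^ n) x" 0] by (simp add: orbit_def)

lemma radius_at_le:
  assumes "A \<noteq> {}" "\<And>y. y \<in> A \<Longrightarrow> norm (x - y) \<le> B"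
  shows "radius_at x A \<le> B"
  unfolding radius_at_def by (rule cSUP_least) (use assms in auto)

lemma orbit_radius_fixed_point:
  assumes "T x = x"
  shows "orbit_radius T x = 0"
proof -
  have "(T ^^ n) x = x" for n by (induction n) (use assms in auto)
  then have "orbit T x = {x}" unfolding orbit_def by auto
  then show ?thesis unfolding radius_at_def by simp
qed

lemma orbit_radius_funpow_le:
  assumes "diminishes_orbit_radius C T" "T ` C \<subseteq> C" "w \<in> C"
  shows "orbit_radius T ((T ^^ n) w) \<le> orbit_radius T w"
proof (induction n)
  case (Suc n)
  have "(T ^^ n) w \<in> C" using funpow_in_invariant[OF assms(2,3)] .
  then have "orbit_radius T (T ((T ^^ n) w)) \<le> orbit_radius T ((T ^^ n) w)"
    using assms(1) unfolding diminishes_orbit_radius_def by blast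
  then show ?case using Suc.IH by simp
qed simp

lemma orbit_radius_le_if_close_to_orbit_images:
  assumes "diminishes_orbit_radius C T" "T ` C \<subseteq> C" "w \<in> C"
    and close: "\<And>y. y \<in> orbit T w \<Longrightarrow> norm (w - T y) \<le> (c + orbit_radius T y) / 2"
  shows "orbit_radius T w \<le> c"
proof -
  have close_w: "norm (w - T ((T ^^ n) w)) \<le> (c + orbit_radius T w) / 2" for n
    using close[of "(T ^^ n) w"] orbit_radius_funpow_le[OF assms(1-3), of n]
    unfolding orbit_def by fastforce
  have "norm (w - y) \<le> (c + orbit_radius T w) / 2" if y: "y \<in> orbit T w" for y
  proof -
    obtain n where n: "y = (T ^^ n) w" using y unfolding orbit_def by blast
    show ?thesis
    proof (cases n)
      case 0
      have "0 \<le> (c + orbit_radius T w) / 2" by (rule order_trans[OF norm_ge_zero close_w])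
      then show ?thesis using n 0 by simp
    next
      case (Suc m)
      then show ?thesis using n close_w[of m] by simp
    qed
  qed
  then have "orbit_radius T w \<le> (c + orbit_radius T w) / 2"
    using self_in_orbit by (intro radius_at_le) fast+
  then show ?thesis by simp
qed

definition kannan_shell :: "('a::real_normed_vector \<Rightarrow> 'a) \<Rightarrow> 'a set \<Rightarrow> real \<Rightarrow> 'a set" where
  "kannan_shell T S c = S \<inter> (\<Inter>y\<in>S. cball (T y) ((c + orbit_radius T y) / 2))"

lemma mem_kannan_shell:
  "v \<in> kannan_shell T S c \<longleftrightarrow> v \<in> S \<and> (\<forall>y\<in>S. norm (v - T y) \<le> (c + orbit_radius T y) / 2)"
  unfolding kannan_shell_def by (auto simp: dist_norm norm_minus_commute)

lemma closed_kannan_shell: "closed S \<Longrightarrow> closed (kannan_shell T S c)"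
  unfolding kannan_shell_def by (auto intro!: closed_Int closed_INT)

lemma convex_kannan_shell: "convex S \<Longrightarrow> convex (kannan_shell T S c)"
  unfolding kannan_shell_def by (auto intro!: convex_Int convex_INT)

lemma image_mem_kannan_shell:
  assumes "orbitally_kannan C T" "S \<subseteq> C" "T ` S \<subseteq> S" "z \<in> S"
  shows "T z \<in> kannan_shell T S (orbit_radius T z)"
  using assms unfolding mem_kannan_shell orbitally_kannan_def by blast

lemma orbit_radius_le_on_kannan_shell:
  assumes "diminishes_orbit_radius C T" "T ` C \<subseteq> C" "S \<subseteq> C" "T ` S \<subseteq> S"
    and "v \<in> kannan_shell T S c"
  shows "orbit_radius T v \<le> c"
proof -
  have "v \<in> S" and close: "\<And>y. y \<in> S \<Longrightarrow> norm (v - T y) \<le> (c + orbit_radius T y) / 2"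
    using assms(5) unfolding mem_kannan_shell by auto
  show ?thesis
    using assms(1,2) \<open>v \<in> S\<close> assms(3) close orbit_subset[OF assms(4) \<open>v \<in> S\<close>]
    by (intro orbit_radius_le_if_close_to_orbit_images) blast+
qed

lemma image_kannan_shell_subset:
  assumes "orbitally_kannan C T" "diminishes_orbit_radius C T" "T ` C \<subseteq> C"
    and "S \<subseteq> C" "T ` S \<subseteq> S"
  shows "T ` kannan_shell T S c \<subseteq> kannan_shell T S c"
proof
  fix u assume "u \<in> T ` kannan_shell T S c"
  then obtain v where v: "v \<in> kannan_shell T S c" and u: "u = T v" by blast
  then have "v \<in> S" unfolding mem_kannan_shell by blast
  have "orbit_radius T v \<le> c"
    using orbit_radius_le_on_kannan_shell[OF assms(2-5) v] .
  moreover have "norm (T v - T y) \<le> (orbit_radius T v + orbit_radius T y) / 2" if "y \<in> S" for y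
    using assms(1,4) \<open>v \<in> S\<close> that unfolding orbitally_kannan_def by blast
  ultimately have "norm (T v - T y) \<le> (c + orbit_radius T y) / 2" if "y \<in> S" for y
    using that by fastforce
  then show "u \<in> kannan_shell T S c"
    using assms(5) \<open>v \<in> S\<close> unfolding u mem_kannan_shell by blast
qed

section \<open>Minimal closed convex invariant sets\<close>

lemma subset_Zorn_minimal:
  assumes "\<A> \<noteq> {}" and "\<And>\<C>. \<C> \<noteq> {} \<Longrightarrow> subset.chain \<A> \<C> \<Longrightarrow> \<Inter>\<C> \<in> \<A>"
  shows "\<exists>M\<in>\<A>. \<forall>X\<in>\<A>. X \<subseteq> M \<longrightarrow> X = M"
proof -
  have "\<exists>M\<in>uminus ` \<A>. \<forall>X\<in>uminus ` \<A>. M \<subseteq> X \<longrightarrow> X = M"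
  proof (rule subset_Zorn_nonempty)
    show "uminus ` \<A> \<noteq> {}" using assms(1) by blast
  next
    fix \<C> assume "\<C> \<noteq> {}" "subset.chain (uminus ` \<A>) \<C>"
    then have "uminus ` \<C> \<noteq> {}" "subset.chain \<A> (uminus ` \<C>)"
      by (auto simp: subset_chain_def)
    then have "\<Inter>(uminus ` \<C>) \<in> \<A>" by (rule assms(2))
    moreover have "\<Union>\<C> = - \<Inter>(uminus ` \<C>)" by auto
    ultimately show "\<Union>\<C> \<in> uminus ` \<A>" by blast
  qed
  then obtain M where M: "M \<in> \<A>" and max: "\<forall>X\<in>uminus ` \<A>. - M \<subseteq> X \<longrightarrow> X = - M"
    by blast
  show ?thesis
  proof (intro bexI[OF _ M] ballI impI)
    fix X assume "X \<in> \<A>" "X \<subseteq> M"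
    then have "- X = - M" using max by blast
    then show "X = M" by simp
  qed
qed

definition closed_convex_invariant :: "('a::real_normed_vector \<Rightarrow> 'a) \<Rightarrow> 'a set \<Rightarrow> 'a set \<Rightarrow> bool" where
  "closed_convex_invariant T C K \<longleftrightarrow> K \<noteq> {} \<and> closed K \<and> convex K \<and> K \<subseteq> C \<and> T ` K \<subseteq> K"

definition minimal_closed_convex_invariant :: "('a::real_normed_vector \<Rightarrow> 'a) \<Rightarrow> 'a set \<Rightarrow> 'a set \<Rightarrow> bool" where
  "minimal_closed_convex_invariant T C K \<longleftrightarrow>
     closed_convex_invariant T C K \<and> (\<forall>K'. closed_convex_invariant T K K' \<longrightarrow> K' = K)"

lemma Inter_closed_convex_invariant_chain:
  fixes C :: "'a::real_normed_vector set"
  assumes "weakly_compact C" "\<C> \<noteq> {}" "subset.chain (Collect (closed_convex_invariant T C)) \<C>"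
  shows "closed_convex_invariant T C (\<Inter>\<C>)"
proof -
  have inv: "\<And>K. K \<in> \<C> \<Longrightarrow> closed_convex_invariant T C K"
    and chain: "\<And>K L. K \<in> \<C> \<Longrightarrow> L \<in> \<C> \<Longrightarrow> K \<subseteq> L \<or> L \<subseteq> K"
    using assms(3) unfolding subset_chain_def by auto
  have fip: "\<forall>\<U>. (\<forall>K\<in>\<U>. closedin weak_topology K) \<and>
      (\<forall>\<F>. finite \<F> \<and> \<F> \<subseteq> \<U> \<longrightarrow> C \<inter> \<Inter>\<F> \<noteq> {}) \<longrightarrow> C \<inter> \<Inter>\<U> \<noteq> {}"
    using assms(1) unfolding weakly_compact_def compactin_fip by (rule conjunct2)
  have weakly_closed: "closedin weak_topology K" if "K \<in> \<C>" for K
    using inv[OF that] unfolding closed_convex_invariant_def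
    by (intro closed_convex_imp_weakly_closed) auto
  have finite_Inter: "C \<inter> \<Inter>\<F> \<noteq> {}" if "finite \<F>" "\<F> \<subseteq> \<C>" for \<F>
  proof (cases "\<F> = {}")
    case True
    obtain K where "K \<in> \<C>" using assms(2) by auto
    then show ?thesis using True inv[of K] unfolding closed_convex_invariant_def by auto
  next
    case False
    have "subset.chain \<C> \<F>" using that(2) chain unfolding subset_chain_def by auto
    then have "\<Inter>\<F> \<in> \<C>" using Inter_in_chain[OF that(1) False] that(2) by auto
    then have "\<Inter>\<F> \<noteq> {}" "\<Inter>\<F> \<subseteq> C" using inv unfolding closed_convex_invariant_def by auto
    then show ?thesis by auto
  qed
  have "C \<inter> \<Inter>\<C> \<noteq> {}"
    by (rule fip[rule_format]) (use weakly_closed finite_Inter in auto)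
  moreover have "closed (\<Inter>\<C>)" "convex (\<Inter>\<C>)" "\<Inter>\<C> \<subseteq> C"
    using inv assms(2) unfolding closed_convex_invariant_def
    by (auto intro!: closed_Inter convex_Inter)
  moreover have "T ` \<Inter>\<C> \<subseteq> \<Inter>\<C>"
  proof (intro image_subsetI InterI)
    fix x K assume "x \<in> \<Inter>\<C>" "K \<in> \<C>"
    then show "T x \<in> K" using inv[of K] unfolding closed_convex_invariant_def by blast
  qed
  ultimately show ?thesis unfolding closed_convex_invariant_def by auto
qed

lemma minimal_closed_convex_invariant_exists:
  fixes C :: "'a::real_normed_vector set"
  assumes "C \<noteq> {}" "weakly_compact C" "convex C" "T ` C \<subseteq> C"
  shows "\<exists>K. minimal_closed_convex_invariant T C K"
proof -
  have "C \<in> Collect (closed_convex_invariant T C)"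
    using assms weakly_compact_imp_closed unfolding closed_convex_invariant_def by auto
  then have "\<exists>K\<in>Collect (closed_convex_invariant T C).
      \<forall>L\<in>Collect (closed_convex_invariant T C). L \<subseteq> K \<longrightarrow> L = K"
    using Inter_closed_convex_invariant_chain[OF assms(2)] by (intro subset_Zorn_minimal) auto
  then obtain K where K: "closed_convex_invariant T C K"
    and min: "\<forall>L. closed_convex_invariant T C L \<longrightarrow> L \<subseteq> K \<longrightarrow> L = K"
    by auto
  have "L = K" if L: "closed_convex_invariant T K L" for L
  proof -
    have "closed_convex_invariant T C L" "L \<subseteq> K"
      using L K unfolding closed_convex_invariant_def by auto
    then show ?thesis using min by blast
  qed
  then show ?thesis using K unfolding minimal_closed_convex_invariant_def by blast
qed

lemma minimal_closed_convex_invariant_kannan_shell: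
  assumes "orbitally_kannan C T" "diminishes_orbit_radius C T" "T ` C \<subseteq> C"
    and K: "minimal_closed_convex_invariant T C K" and "z \<in> K"
  shows "kannan_shell T K (orbit_radius T z) = K"
proof -
  have "closed_convex_invariant T C K"
    and K_min: "\<And>L. closed_convex_invariant T K L \<Longrightarrow> L = K"
    using K unfolding minimal_closed_convex_invariant_def by auto
  then have "closed K" "convex K" "K \<subseteq> C" "T ` K \<subseteq> K"
    unfolding closed_convex_invariant_def by auto
  have "closed_convex_invariant T K (kannan_shell T K (orbit_radius T z))"
    unfolding closed_convex_invariant_def
  proof (intro conjI)
    show "kannan_shell T K (orbit_radius T z) \<noteq> {}"
      using image_mem_kannan_shell[OF assms(1) \<open>K \<subseteq> C\<close> \<open>T ` K \<subseteq> K\<close> \<open>z \<in> K\<close>] by blast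
    show "closed (kannan_shell T K (orbit_radius T z))"
      using \<open>closed K\<close> by (rule closed_kannan_shell)
    show "convex (kannan_shell T K (orbit_radius T z))"
      using \<open>convex K\<close> by (rule convex_kannan_shell)
    show "kannan_shell T K (orbit_radius T z) \<subseteq> K"
      unfolding kannan_shell_def by blast
    show "T ` kannan_shell T K (orbit_radius T z) \<subseteq> kannan_shell T K (orbit_radius T z)"
      using image_kannan_shell_subset[OF assms(1-3) \<open>K \<subseteq> C\<close> \<open>T ` K \<subseteq> K\<close>] .
  qed
  then show ?thesis by (rule K_min)
qed

lemma minimal_closed_convex_invariant_orbit_radius_eq:
  assumes "orbitally_kannan C T" "diminishes_orbit_radius C T" "T ` C \<subseteq> C"
    and K: "minimal_closed_convex_invariant T C K" and "w \<in> K" "z \<in> K"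
  shows "orbit_radius T w = orbit_radius T z"
proof -
  have "K \<subseteq> C" "T ` K \<subseteq> K"
    using K unfolding minimal_closed_convex_invariant_def closed_convex_invariant_def by auto
  have "orbit_radius T w \<le> orbit_radius T v" if "w \<in> K" "v \<in> K" for w v
    using orbit_radius_le_on_kannan_shell[OF assms(2,3) \<open>K \<subseteq> C\<close> \<open>T ` K \<subseteq> K\<close>]
      minimal_closed_convex_invariant_kannan_shell[OF assms(1-4) that(2)] that(1) by simp
  then show ?thesis using assms(5,6) by (simp add: order_antisym)
qed

lemma minimal_closed_convex_invariant_dist_le:
  assumes "orbitally_kannan C T" "diminishes_orbit_radius C T" "T ` C \<subseteq> C"
    and K: "minimal_closed_convex_invariant T C K" and z: "z \<in> K" and "w \<in> K" "v \<in> K"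
  shows "dist w v \<le> orbit_radius T z"
proof -
  have "closed K" "convex K" "T ` K \<subseteq> K"
    and K_min: "\<And>L. closed_convex_invariant T K L \<Longrightarrow> L = K"
    using K unfolding minimal_closed_convex_invariant_def closed_convex_invariant_def by auto
  define c where "c = orbit_radius T z"
  have "norm (u - T y) \<le> c" if "u \<in> K" "y \<in> K" for u y
  proof -
    have "u \<in> kannan_shell T K c"
      using minimal_closed_convex_invariant_kannan_shell[OF assms(1-4) z] that(1) unfolding c_def by simp
    then have "norm (u - T y) \<le> (c + orbit_radius T y) / 2"
      using that(2) unfolding mem_kannan_shell by blast
    then show ?thesis
      using minimal_closed_convex_invariant_orbit_radius_eq[OF assms(1-4) that(2) z] by (simp add: c_def)
  qed
  define P where "P = K \<inter> (\<Inter>u\<in>K. cball u c)"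
  have "T ` K \<subseteq> P"
    using \<open>T ` K \<subseteq> K\<close> \<open>\<And>u y. u \<in> K \<Longrightarrow> y \<in> K \<Longrightarrow> norm (u - T y) \<le> c\<close>
    unfolding P_def by (auto simp: dist_norm)
  moreover have "P \<subseteq> K" "closed P" "convex P"
    using \<open>closed K\<close> \<open>convex K\<close> unfolding P_def
    by (auto intro!: closed_Int closed_INT convex_Int convex_INT)
  ultimately have "closed_convex_invariant T K P"
    using z unfolding closed_convex_invariant_def by blast
  then have "v \<in> P" using K_min assms(7) by blast
  then show ?thesis using assms(6) unfolding P_def c_def by auto
qed

lemma minimal_closed_convex_invariant_orbit_radius:
  assumes "orbitally_kannan C T" "diminishes_orbit_radius C T" "T ` C \<subseteq> C"
    and K: "minimal_closed_convex_invariant T C K"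
  shows "bounded K" and "\<And>w. w \<in> K \<Longrightarrow> orbit_radius T w = diameter K"
proof -
  have "K \<noteq> {}" "T ` K \<subseteq> K"
    using K unfolding minimal_closed_convex_invariant_def closed_convex_invariant_def by auto
  then obtain z where z: "z \<in> K" by blast
  note close = minimal_closed_convex_invariant_dist_le[OF assms z]
  show "bounded K"
    unfolding bounded_def using close z by blast
  have "diameter K \<le> orbit_radius T z"
    using z close by (intro diameter_le) (auto simp: dist_norm)
  moreover have "orbit_radius T z \<le> diameter K"
    using self_in_orbit[of z T] orbit_subset[OF \<open>T ` K \<subseteq> K\<close> z]
      diameter_bounded_bound[OF \<open>bounded K\<close> z]
    by (intro radius_at_le) (auto simp: dist_norm)
  ultimately show "orbit_radius T w = diameter K" if "w \<in> K" for w
    using minimal_closed_convex_invariant_orbit_radius_eq[OF assms that z] by simp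
qed

lemma orbitally_kannan_fixed_point_unique:
  assumes "orbitally_kannan C T" "x \<in> C" "T x = x" "y \<in> C" "T y = y"
  shows "x = y"
proof -
  have "norm (T x - T y) \<le> (orbit_radius T x + orbit_radius T y) / 2"
    using assms unfolding orbitally_kannan_def by blast
  then show ?thesis using assms orbit_radius_fixed_point[of T] by simp
qed

lemma diameter_pos_if_moved_point:
  fixes K :: "'a::metric_space set"
  assumes "bounded K" "T ` K \<subseteq> K" "z \<in> K" "T z \<noteq> z"
  shows "0 < diameter K"
proof -
  have "0 < dist z (T z)" using assms(4) by simp
  also have "\<dots> \<le> diameter K" using assms by (intro diameter_bounded_bound) auto
  finally show ?thesis .
qed

theorem theorem4p5:
  fixes C :: "'a::banach set" and T :: "'a \<Rightarrow> 'a"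
  assumes "C \<noteq> {}"
    and "weakly_compact C" and "convex C"
    and "T ` C \<subseteq> C"
    and "orbitally_kannan C T"
    and "diminishes_orbit_radius C T"
  shows "((\<nexists>x. x \<in> C \<and> T x = x) \<longrightarrow>
            (\<exists>K0. closed K0 \<and> convex K0 \<and> K0 \<subseteq> C \<and> T ` K0 \<subseteq> K0 \<and>
                  diameter K0 > 0 \<and>
                  (\<forall>x\<in>K0. radius_at x (orbit T x) = diameter K0)))
       \<and> ((\<forall>K0. closed K0 \<and> convex K0 \<and> K0 \<subseteq> C \<and> diameter K0 > 0 \<longrightarrow>
              (\<exists>x0\<in>K0. \<forall>y\<in>K0. radius_at x0 (orbit T y) < diameter K0))
           \<longrightarrow> (\<exists>!x. x \<in> C \<and> T x = x))"
proof -
  obtain K where K: "minimal_closed_convex_invariant T C K"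
    using minimal_closed_convex_invariant_exists[OF assms(1-4)] by blast
  then have K_props: "K \<noteq> {}" "closed K" "convex K" "K \<subseteq> C" "T ` K \<subseteq> K"
    unfolding minimal_closed_convex_invariant_def closed_convex_invariant_def by auto
  note K_radius = minimal_closed_convex_invariant_orbit_radius[OF assms(5,6,4) K]
  have K_diameter: "0 < diameter K" if "\<nexists>x. x \<in> C \<and> T x = x"
    using K_props K_radius(1) that by (metis diameter_pos_if_moved_point ex_in_conv subsetD)
  show ?thesis
  proof (intro conjI impI)
    assume "\<nexists>x. x \<in> C \<and> T x = x"
    then show "\<exists>K0. closed K0 \<and> convex K0 \<and> K0 \<subseteq> C \<and> T ` K0 \<subseteq> K0 \<and> diameter K0 > 0 \<and>
        (\<forall>x\<in>K0. radius_at x (orbit T x) = diameter K0)"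
      using K_props K_diameter K_radius(2) by (intro exI[of _ K]) simp
  next
    assume small_orbit: "\<forall>K0. closed K0 \<and> convex K0 \<and> K0 \<subseteq> C \<and> diameter K0 > 0 \<longrightarrow>
        (\<exists>x0\<in>K0. \<forall>y\<in>K0. radius_at x0 (orbit T y) < diameter K0)"
    have "\<exists>x. x \<in> C \<and> T x = x"
    proof (rule ccontr)
      assume "\<nexists>x. x \<in> C \<and> T x = x"
      then have "\<exists>x0\<in>K. \<forall>y\<in>K. radius_at x0 (orbit T y) < diameter K"
        using K_props K_diameter by (intro small_orbit[rule_format]) auto
      then show False using K_radius(2) by fastforce
    qed
    then show "\<exists>!x. x \<in> C \<and> T x = x"
      using orbitally_kannan_fixed_point_unique[OF assms(5)] by blast
  qed
qed

end
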